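(* For every modal proposition $A$, $\mathsf{iK4}\vdash A^\Box\to\Box A^\Box$.
   Context: Modal language: propositional variables, $\bot$, $\wedge,\vee,\to$, $\Box$; atomic = variables and $\bot$. $\mathsf{iK4}$: intuitionistic propositional logic in the modal language plus $\Box(A\to B)\to(\Box A\to\Box B)$ and $\Box A\to\Box\Box A$, closed under modus ponens and necessitation. Box-translation: $A^\Box:=A\wedge\Box A$ for atomic $A$; $(A\circ B)^\Box:=A^\Box\circ B^\Box$ for $\circ\in\{\wedge,\vee\}$; $(A\to B)^\Box:=(A^\Box\to B^\Box)\wedge\Box(A^\Box\to B^\Box)$; $(\Box A)^\Box:=\Box(A^\Box)$. *)

theory Defs
  imports Main
begin

datatype fm =
    Var nat
  | Bot
  | Conj fm fm
  | Disj fm fm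
  | Imp fm fm
  | Box fm

inductive iK4 :: "fm \<Rightarrow> bool" where
  ax_K: "iK4 (Imp A (Imp B A))"
| ax_S: "iK4 (Imp (Imp A (Imp B C)) (Imp (Imp A B) (Imp A C)))"
| ax_conjI: "iK4 (Imp A (Imp B (Conj A B)))"
| ax_conjE1: "iK4 (Imp (Conj A B) A)"
| ax_conjE2: "iK4 (Imp (Conj A B) B)"
| ax_disjI1: "iK4 (Imp A (Disj A B))"
| ax_disjI2: "iK4 (Imp B (Disj A B))"
| ax_disjE: "iK4 (Imp (Imp A C) (Imp (Imp B C) (Imp (Disj A B) C)))"
| ax_efq: "iK4 (Imp Bot A)"
| ax_boxK: "iK4 (Imp (Box (Imp A B)) (Imp (Box A) (Box B)))"
| ax_box4: "iK4 (Imp (Box A) (Box (Box A)))"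
| mp: "iK4 (Imp A B) \<Longrightarrow> iK4 A \<Longrightarrow> iK4 B"
| nec: "iK4 A \<Longrightarrow> iK4 (Box A)"

fun boxtr :: "fm \<Rightarrow> fm" where
  "boxtr (Var p) = Conj (Var p) (Box (Var p))"
| "boxtr Bot = Conj Bot (Box Bot)"
| "boxtr (Conj A B) = Conj (boxtr A) (boxtr B)"
| "boxtr (Disj A B) = Disj (boxtr A) (boxtr B)"
| "boxtr (Imp A B) = Conj (Imp (boxtr A) (boxtr B)) (Box (Imp (boxtr A) (boxtr B)))"
| "boxtr (Box A) = Box (boxtr A)"

end

theory Submission
  imports Defs
begin

text \<open>Every translated formula is built by \<open>\<and>\<close>, \<open>\<or>\<close> and \<open>\<box>\<close> from formulas of the shape
  \<open>C \<and> \<box>C\<close>. Such a formula implies its own box by axiom 4, and the property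
  \<open>X \<rightarrow> \<box>X\<close> is preserved by \<open>\<and>\<close> (box distributes over conjunction), by \<open>\<or>\<close>
  (box is monotone) and by \<open>\<box>\<close> (axiom 4 again).\<close>

lemma iK4_imp_mp: "iK4 (Imp X (Imp B C)) \<Longrightarrow> iK4 (Imp X B) \<Longrightarrow> iK4 (Imp X C)"
  by (meson iK4.ax_S iK4.mp)

lemma iK4_imp_weaken: "iK4 C \<Longrightarrow> iK4 (Imp X C)"
  by (meson iK4.ax_K iK4.mp)

lemma iK4_imp_trans: "iK4 (Imp A B) \<Longrightarrow> iK4 (Imp B C) \<Longrightarrow> iK4 (Imp A C)"
  by (rule iK4_imp_mp[OF iK4_imp_weaken])

lemma iK4_imp_conjI: "iK4 (Imp X A) \<Longrightarrow> iK4 (Imp X B) \<Longrightarrow> iK4 (Imp X (Conj A B))"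
  by (rule iK4_imp_mp[OF iK4_imp_trans[OF _ iK4.ax_conjI]])

lemma iK4_disjE: "iK4 (Imp A C) \<Longrightarrow> iK4 (Imp B C) \<Longrightarrow> iK4 (Imp (Disj A B) C)"
  by (meson iK4.ax_disjE iK4.mp)

lemma iK4_box_mono: "iK4 (Imp A B) \<Longrightarrow> iK4 (Imp (Box A) (Box B))"
  by (meson iK4.ax_boxK iK4.mp iK4.nec)

lemma iK4_box_conj: "iK4 (Imp (Conj (Box A) (Box B)) (Box (Conj A B)))"
proof -
  have "iK4 (Imp (Box A) (Imp (Box B) (Box (Conj A B))))"
    by (rule iK4_imp_trans[OF iK4_box_mono[OF iK4.ax_conjI] iK4.ax_boxK])
  then have "iK4 (Imp (Conj (Box A) (Box B)) (Imp (Box B) (Box (Conj A B))))"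
    by (rule iK4_imp_trans[OF iK4.ax_conjE1])
  then show ?thesis
    by (rule iK4_imp_mp[OF _ iK4.ax_conjE2])
qed

lemma iK4_imp_box_conjI:
  "iK4 (Imp X (Box A)) \<Longrightarrow> iK4 (Imp X (Box B)) \<Longrightarrow> iK4 (Imp X (Box (Conj A B)))"
  by (rule iK4_imp_trans[OF iK4_imp_conjI iK4_box_conj])

lemma iK4_conj_box_imp_box: "iK4 (Imp (Conj C (Box C)) (Box (Conj C (Box C))))"
  by (rule iK4_imp_box_conjI[OF iK4.ax_conjE2 iK4_imp_trans[OF iK4.ax_conjE2 iK4.ax_box4]])

lemma iK4_conj_imp_box:
  "iK4 (Imp A (Box A)) \<Longrightarrow> iK4 (Imp B (Box B)) \<Longrightarrow> iK4 (Imp (Conj A B) (Box (Conj A B)))"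
  by (rule iK4_imp_box_conjI[OF iK4_imp_trans[OF iK4.ax_conjE1] iK4_imp_trans[OF iK4.ax_conjE2]])

lemma iK4_disj_imp_box:
  "iK4 (Imp A (Box A)) \<Longrightarrow> iK4 (Imp B (Box B)) \<Longrightarrow> iK4 (Imp (Disj A B) (Box (Disj A B)))"
  by (rule iK4_disjE[OF iK4_imp_trans[OF _ iK4_box_mono[OF iK4.ax_disjI1]]
                        iK4_imp_trans[OF _ iK4_box_mono[OF iK4.ax_disjI2]]])

theorem lemma4p13:
  shows "iK4 (Imp (boxtr A) (Box (boxtr A)))"
proof (induction A)
  case (Var p)
  show ?case by (simp only: boxtr.simps) (rule iK4_conj_box_imp_box)
next
  case Bot
  show ?case by (simp only: boxtr.simps) (rule iK4_conj_box_imp_box)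
next
  case (Conj A B)
  then show ?case by (simp only: boxtr.simps) (rule iK4_conj_imp_box)
next
  case (Disj A B)
  then show ?case by (simp only: boxtr.simps) (rule iK4_disj_imp_box)
next
  case (Imp A B)
  show ?case by (simp only: boxtr.simps) (rule iK4_conj_box_imp_box)
next
  case (Box A)
  show ?case by (simp only: boxtr.simps) (rule iK4.ax_box4)
qed

end
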